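(* Let $B:\Sigma^*\to\Sigma^*$ be a limit computable function. There is a constant $c>0$ depending only on $B$ such that for all $z\in\Sigma^*$, $$\mathbf{m}(z\mid\mathcal{H}) \ge c\sum_{x:\,B(x)=z}\mathbf{m}(x).$$
   Context: $\Sigma=\{0,1\}$, $\Sigma^*$ the finite binary strings, $\perp$ the empty string. $\mathbf{m}(x\mid y)$ is a fixed universal (maximal up to a multiplicative constant among $y$-semicomputable semi-measures) semi-measure on $\Sigma^*$ relativized to $y$, where $y$ may be a finite string or infinite sequence; $\mathbf{m}(x)=\mathbf{m}(x\mid\perp)$. A semi-measure is $p:\Sigma^*\to\mathbb{R}_{\ge0}$ with $\sum_{x\ne\perp}p(x)\le 1$. $\mathcal{H}$ is the halting sequence, the characteristic sequence of the domain of the fixed universal prefix-free machine. A function $B:\Sigma^*\to\Sigma^*$ is limit computable if some Turing machine $T$, whenever $B(x)\ne\perp$, on input $x$ eventually writes $B(x)$ on its output tape and never changes it afterward (halting or not); when $B(x)=\perp$, $T$ eventually outputs nothing or changes its output forever. *)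

theory Defs
  imports "HOL-Analysis.Analysis"
begin

fun enc :: "bool list \<Rightarrow> nat" where
  "enc [] = 0"
| "enc (b # bs) = 2 * enc bs + (if b then 2 else 1)"

function dec :: "nat \<Rightarrow> bool list" where
  "dec n = (if n = 0 then [] else if odd n then False # dec ((n - 1) div 2)
            else True # dec ((n - 2) div 2))"
  by auto
termination by (relation "Wellfounded.measure id") auto

declare dec.simps[simp del]

datatype recf = Zf | Sf | Proj nat | Comp recf "recf list" | Prim recf recf | Mn recf | Orc

inductive evalr :: "(nat \<Rightarrow> bool) \<Rightarrow> recf \<Rightarrow> nat list \<Rightarrow> nat \<Rightarrow> bool" for Or where
  zero: "evalr Or Zf xs 0"
| succ: "evalr Or Sf (x # xs) (Suc x)"
| proj: "i < length xs \<Longrightarrow> evalr Or (Proj i) xs (xs ! i)"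
| orc: "evalr Or Orc (x # xs) (if Or x then 1 else 0)"
| comp: "list_all2 (\<lambda>g y. evalr Or g xs y) gs ys \<Longrightarrow> evalr Or f ys z \<Longrightarrow> evalr Or (Comp f gs) xs z"
| prim0: "evalr Or f xs y \<Longrightarrow> evalr Or (Prim f g) (0 # xs) y"
| primS: "evalr Or (Prim f g) (n # xs) y \<Longrightarrow> evalr Or g (n # y # xs) z \<Longrightarrow>
          evalr Or (Prim f g) (Suc n # xs) z"
| mn: "evalr Or f (n # xs) 0 \<Longrightarrow> (\<forall>m<n. \<exists>k. evalr Or f (m # xs) (Suc k)) \<Longrightarrow>
       evalr Or (Mn f) xs n"

definition no_oracle :: "nat \<Rightarrow> bool" where "no_oracle = (\<lambda>_. False)"

definition partial_comp_str :: "(nat \<Rightarrow> bool) \<Rightarrow> (bool list \<Rightarrow> bool list option) \<Rightarrow> bool" where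
  "partial_comp_str Or F \<longleftrightarrow> (\<exists>r. \<forall>x y. evalr Or r [enc x] y \<longleftrightarrow> (\<exists>s. F x = Some s \<and> y = enc s))"

definition total_comp_str_nat_nat :: "(nat \<Rightarrow> bool) \<Rightarrow> (bool list \<Rightarrow> nat \<Rightarrow> nat) \<Rightarrow> bool" where
  "total_comp_str_nat_nat Or g \<longleftrightarrow> (\<exists>r. \<forall>x t y. evalr Or r [enc x, t] y \<longleftrightarrow> y = g x t)"

definition prefix_free_dom :: "(bool list \<Rightarrow> bool list option) \<Rightarrow> bool" where
  "prefix_free_dom T \<longleftrightarrow> (\<forall>p q. T p \<noteq> None \<longrightarrow> T q \<noteq> None \<longrightarrow> (\<exists>r. q = p @ r) \<longrightarrow> p = q)"

definition universal_pf_machine :: "(bool list \<Rightarrow> bool list option) \<Rightarrow> bool" where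
  "universal_pf_machine U \<longleftrightarrow> partial_comp_str no_oracle U \<and> prefix_free_dom U \<and>
     (\<forall>T. partial_comp_str no_oracle T \<and> prefix_free_dom T \<longrightarrow>
        (\<exists>w. \<forall>x. U (w @ x) = T x))"

definition halting_seq :: "(bool list \<Rightarrow> bool list option) \<Rightarrow> nat \<Rightarrow> bool" where
  "halting_seq U = (\<lambda>n. U (dec n) \<noteq> None)"

definition semimeasure :: "(bool list \<Rightarrow> real) \<Rightarrow> bool" where
  "semimeasure p \<longleftrightarrow> (\<forall>x. p x \<ge> 0) \<and> p summable_on (UNIV - {[]}) \<and>
     infsum p (UNIV - {[]}) \<le> 1"

definition lower_semicomp :: "(nat \<Rightarrow> bool) \<Rightarrow> (bool list \<Rightarrow> real) \<Rightarrow> bool" where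
  "lower_semicomp Or p \<longleftrightarrow> (\<exists>a b. total_comp_str_nat_nat Or a \<and> total_comp_str_nat_nat Or b \<and>
     (\<forall>x. incseq (\<lambda>t. real (a x t) / real (b x t + 1)) \<and>
          (\<lambda>t. real (a x t) / real (b x t + 1)) \<longlonglongrightarrow> p x))"

definition universal_semimeasure :: "(nat \<Rightarrow> bool) \<Rightarrow> (bool list \<Rightarrow> real) \<Rightarrow> bool" where
  "universal_semimeasure Or m \<longleftrightarrow> semimeasure m \<and> lower_semicomp Or m \<and>
     (\<forall>p. semimeasure p \<and> lower_semicomp Or p \<longrightarrow> (\<exists>c>0. \<forall>x. m x \<ge> c * p x))"

text \<open>g x t is the content of the output tape of T on input x at step t (computable).
  B x is the eventual stable output, or the empty string if the output never stabilizes.\<close>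
definition limit_computable :: "(bool list \<Rightarrow> bool list) \<Rightarrow> bool" where
  "limit_computable B \<longleftrightarrow> (\<exists>g :: bool list \<Rightarrow> nat \<Rightarrow> bool list.
     total_comp_str_nat_nat no_oracle (\<lambda>x t. enc (g x t)) \<and>
     (\<forall>x. if (\<exists>v t0. \<forall>t\<ge>t0. g x t = v) then (\<exists>t0. \<forall>t\<ge>t0. g x t = B x) else B x = []))"

end

theory Submission
  imports Defs
begin

text \<open>
  Let g x t be the computable approximation whose eventual value is B x. The set of pairs (x, t)
  at which g x has not yet stabilized is computably enumerable, so the halting sequence decides it.
  Relative to the halting sequence, the mass p z of the strings x \<noteq> [] at which g x stabilizes
  to z (the empty string is left out because a semimeasure only bounds the mass of nonempty
  strings) is therefore lower semicomputable: at stage s, add the current approximation of m x for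
  every x with index below s that has been seen stable with value z before time s. Since these
  preimages are disjoint, p is a semimeasure, so universality gives m(z | H) \<ge> c p z. For
  z \<noteq> [] the preimage of z under B is the stable preimage, up to the string [] itself;
  the two exceptional values z = [] and z = B [] are absorbed into the constant, because a
  universal semimeasure is positive everywhere.
\<close>

lemma enc_dec [simp]: "enc (dec n) = n"
proof (induction n rule: less_induct)
  case (less n)
  show ?case
  proof (cases "n = 0")
    case True
    then show ?thesis by (simp add: dec.simps)
  next
    case False
    show ?thesis
    proof (cases "odd n")
      case True
      then obtain k where k: "n = 2 * k + 1" by (blast elim: oddE)
      then have "dec n = False # dec k" by (subst dec.simps) simp
      then show ?thesis using less[of k] k by simp
    next
      case even: False
      then obtain k0 where "n = 2 * k0" by (blast elim: evenE)
      with False obtain k where k: "n = 2 * k + 2" by (cases k0) auto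
      then have "dec n = True # dec k" by (subst dec.simps) simp
      then show ?thesis using less[of k] k by simp
    qed
  qed
qed

lemma dec_enc [simp]: "dec (enc s) = s"
proof (induction s)
  case Nil
  then show ?case by (simp add: dec.simps)
next
  case (Cons b bs)
  have "dec (enc (b # bs)) = b # dec (enc bs)"
    by (cases b) (subst dec.simps, simp)+
  then show ?case using Cons by simp
qed

lemma enc_eq_iff [simp]: "enc a = enc b \<longleftrightarrow> a = b"
  by (metis dec_enc)

lemma enc_eq_iff_eq_dec: "enc x = n \<longleftrightarrow> x = dec n"
  by auto

lemma bij_dec: "bij dec"
  by (metis bij_betw_byWitness dec_enc enc_dec top_greatest)

lemma dec_eq_Nil_iff [simp]: "dec n = [] \<longleftrightarrow> n = 0"
  by (metis dec_enc enc.simps(1) enc_dec)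

lemma enc_append: "enc (w @ s) = enc w + 2 ^ length w * enc s"
  by (induction w) auto

lemma enc_replicate_False_True: "enc (replicate k False @ [True]) = 3 * 2 ^ k - 1"
proof (induction k)
  case (Suc k)
  have "(2::nat) \<le> 6 * 2 ^ k" using one_le_power[of "2::nat" k] by linarith
  then show ?case using Suc by (simp add: algebra_simps, linarith)
qed simp

section \<open>Total computable functions of tuples of numbers\<close>

inductive_cases evalr_ZfE: "evalr Or Zf xs y"
inductive_cases evalr_SfE: "evalr Or Sf xs y"
inductive_cases evalr_ProjE: "evalr Or (Proj i) xs y"
inductive_cases evalr_OrcE: "evalr Or Orc xs y"
inductive_cases evalr_CompE: "evalr Or (Comp f gs) xs y"
inductive_cases evalr_PrimE: "evalr Or (Prim f g) xs y"
inductive_cases evalr_MnE: "evalr Or (Mn f) xs y"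

definition computes :: "(nat \<Rightarrow> bool) \<Rightarrow> nat \<Rightarrow> recf \<Rightarrow> (nat list \<Rightarrow> nat) \<Rightarrow> bool" where
  "computes Or k r F \<longleftrightarrow> (\<forall>xs y. length xs = k \<longrightarrow> (evalr Or r xs y \<longleftrightarrow> y = F xs))"

definition computable :: "(nat \<Rightarrow> bool) \<Rightarrow> nat \<Rightarrow> (nat list \<Rightarrow> nat) \<Rightarrow> bool" where
  "computable Or k F \<longleftrightarrow> (\<exists>r. computes Or k r F)"

lemma computesD: "computes Or k r F \<Longrightarrow> length xs = k \<Longrightarrow> evalr Or r xs y \<longleftrightarrow> y = F xs"
  unfolding computes_def by blast

lemma computes_Zf: "computes Or k Zf (\<lambda>_. 0)"
  unfolding computes_def by (auto elim: evalr_ZfE intro: evalr.zero)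

lemma computes_Sf: "computes Or (Suc 0) Sf (\<lambda>xs. Suc (hd xs))"
  unfolding computes_def by (auto elim!: evalr_SfE intro: evalr.succ simp: length_Suc_conv)

lemma computes_Proj: "i < k \<Longrightarrow> computes Or k (Proj i) (\<lambda>xs. xs ! i)"
  unfolding computes_def by (auto elim!: evalr_ProjE intro: evalr.proj)

lemma computes_Orc: "computes Or (Suc 0) Orc (\<lambda>xs. of_bool (Or (hd xs)))"
  unfolding computes_def
proof (intro allI impI)
  fix xs :: "nat list" and y
  assume "length xs = Suc 0"
  then obtain x where xs: "xs = [x]" by (auto simp: length_Suc_conv)
  have "evalr Or Orc [x] (if Or x then 1 else 0)" by (rule evalr.orc)
  then show "evalr Or Orc xs y \<longleftrightarrow> y = of_bool (Or (hd xs))"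
    unfolding xs by (auto elim: evalr_OrcE)
qed

lemma evalr_list_iff:
  assumes "list_all2 (\<lambda>g G. computes Or k g G) gs Gs" "length xs = k"
  shows "list_all2 (\<lambda>g y. evalr Or g xs y) gs ys \<longleftrightarrow> ys = map (\<lambda>G. G xs) Gs"
  using assms(1)
proof (induction arbitrary: ys rule: list_all2_induct)
  case (Cons g G gs Gs)
  then show ?case using computesD[OF Cons.hyps(1) assms(2)] by (cases ys) auto
qed simp

lemma computes_Comp:
  assumes "computes Or (length gs) h H" "list_all2 (\<lambda>g G. computes Or k g G) gs Gs"
  shows "computes Or k (Comp h gs) (\<lambda>xs. H (map (\<lambda>G. G xs) Gs))"
  unfolding computes_def
proof (intro allI impI)
  fix xs :: "nat list" and y
  assume xs: "length xs = k"
  have "length (map (\<lambda>G. G xs) Gs) = length gs"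
    using assms(2) by (simp add: list_all2_lengthD)
  then show "evalr Or (Comp h gs) xs y \<longleftrightarrow> y = H (map (\<lambda>G. G xs) Gs)"
    using evalr_list_iff[OF assms(2) xs] computesD[OF assms(1)]
    by (auto elim!: evalr_CompE intro: evalr.comp)
qed

fun prim_rec :: "(nat list \<Rightarrow> nat) \<Rightarrow> (nat list \<Rightarrow> nat) \<Rightarrow> nat \<Rightarrow> nat list \<Rightarrow> nat" where
  "prim_rec F G 0 xs = F xs"
| "prim_rec F G (Suc n) xs = G (n # prim_rec F G n xs # xs)"

lemma computes_Prim:
  assumes F: "computes Or k f F" and G: "computes Or (Suc (Suc k)) g G"
  shows "computes Or (Suc k) (Prim f g) (\<lambda>xs. prim_rec F G (hd xs) (tl xs))"
proof -
  have "evalr Or (Prim f g) (n # xs) y \<longleftrightarrow> y = prim_rec F G n xs" if "length xs = k" for n xs y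
    using that
  proof (induction n arbitrary: y)
    case 0
    then show ?case using computesD[OF F] by (auto elim: evalr_PrimE intro: evalr.prim0)
  next
    case (Suc n)
    then have "length (n # prim_rec F G n xs # xs) = Suc (Suc k)" by simp
    then show ?case using Suc computesD[OF G] by (auto elim: evalr_PrimE intro: evalr.primS)
  qed
  then show ?thesis
    unfolding computes_def by (auto simp: length_Suc_conv)
qed

lemma evalr_Mn_iff:
  assumes "computes Or (Suc k) f F" "length xs = k"
  shows "evalr Or (Mn f) xs n \<longleftrightarrow> F (n # xs) = 0 \<and> (\<forall>m<n. F (m # xs) \<noteq> 0)"
proof
  assume "evalr Or (Mn f) xs n"
  then show "F (n # xs) = 0 \<and> (\<forall>m<n. F (m # xs) \<noteq> 0)"
    using computesD[OF assms(1)] assms(2) by (fastforce elim!: evalr_MnE)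
next
  assume F: "F (n # xs) = 0 \<and> (\<forall>m<n. F (m # xs) \<noteq> 0)"
  then have "\<forall>m<n. \<exists>k. evalr Or f (m # xs) (Suc k)"
    using computesD[OF assms(1)] assms(2) by (metis length_Cons not0_implies_Suc)
  then show "evalr Or (Mn f) xs n"
    using F computesD[OF assms(1)] assms(2) by (auto intro: evalr.mn)
qed

lemma computable_cong:
  "computable Or k F \<Longrightarrow> (\<And>xs. length xs = k \<Longrightarrow> F xs = G xs) \<Longrightarrow> computable Or k G"
  unfolding computable_def computes_def by metis

lemma computable_proj: "i < k \<Longrightarrow> computable Or k (\<lambda>xs. xs ! i)"
  unfolding computable_def using computes_Proj by blast

lemma computable_comp:
  assumes "computable Or (length Gs) H" "\<And>G. G \<in> set Gs \<Longrightarrow> computable Or k G"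
  shows "computable Or k (\<lambda>xs. H (map (\<lambda>G. G xs) Gs))"
proof -
  obtain h where h: "computes Or (length Gs) h H"
    using assms(1) unfolding computable_def by blast
  have "\<exists>gs. list_all2 (\<lambda>g G. computes Or k g G) gs Gs"
    using assms(2) by (induction Gs) (auto simp: computable_def list_all2_Cons2)
  then obtain gs where gs: "list_all2 (\<lambda>g G. computes Or k g G) gs Gs" by blast
  then have "length gs = length Gs" by (rule list_all2_lengthD)
  then show ?thesis
    using computes_Comp[OF _ gs] h unfolding computable_def by auto
qed

lemma computable_comp1:
  "computable Or (Suc 0) H \<Longrightarrow> computable Or k A \<Longrightarrow> computable Or k (\<lambda>xs. H [A xs])"
  using computable_comp[of Or "[A]" H k] by simp

lemma computable_comp2:
  "computable Or (Suc (Suc 0)) H \<Longrightarrow> computable Or k A \<Longrightarrow> computable Or k B \<Longrightarrow>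
    computable Or k (\<lambda>xs. H [A xs, B xs])"
  using computable_comp[of Or "[A, B]" H k] by auto

lemma computable_comp2_fun:
  "computable Or (Suc (Suc 0)) (\<lambda>xs. H (xs ! 0) (xs ! 1)) \<Longrightarrow> computable Or k A \<Longrightarrow>
    computable Or k B \<Longrightarrow> computable Or k (\<lambda>xs. H (A xs) (B xs))"
  using computable_comp2[of Or "\<lambda>xs. H (xs ! 0) (xs ! 1)"] by simp

lemma computable_comp_Cons:
  assumes "computable Or (Suc k) H" "computable Or k A"
  shows "computable Or k (\<lambda>xs. H (A xs # xs))"
proof (rule computable_cong)
  show "computable Or k (\<lambda>xs. H (map (\<lambda>G. G xs) (A # map (\<lambda>i xs. xs ! i) [0..<k])))"
    by (rule computable_comp) (use assms in \<open>auto intro: computable_proj\<close>)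
  show "H (map (\<lambda>G. G xs) (A # map (\<lambda>i xs. xs ! i) [0..<k])) = H (A xs # xs)"
    if "length xs = k" for xs
    using that map_nth[of xs] by (simp add: comp_def)
qed

lemma computable_Suc: "computable Or k A \<Longrightarrow> computable Or k (\<lambda>xs. Suc (A xs))"
  using computable_comp1[of Or "\<lambda>xs. Suc (hd xs)"] computes_Sf
  by (simp add: computable_def) blast

lemma computable_const: "computable Or k (\<lambda>_. c)"
proof (induction c)
  case 0
  then show ?case using computes_Zf unfolding computable_def by blast
qed (rule computable_Suc)

lemma computable_oracle: "computable Or k A \<Longrightarrow> computable Or k (\<lambda>xs. of_bool (Or (A xs)))"
  using computable_comp1[of Or "\<lambda>xs. of_bool (Or (hd xs))"] computes_Orc
  by (simp add: computable_def) blast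

lemma computable_prim_recI:
  assumes "computable Or k F" "computable Or (Suc (Suc k)) G"
    and "\<And>n xs. length xs = k \<Longrightarrow> prim_rec F G n xs = R (n # xs)"
  shows "computable Or (Suc k) R"
proof (rule computable_cong)
  show "computable Or (Suc k) (\<lambda>xs. prim_rec F G (hd xs) (tl xs))"
    using assms(1,2) computes_Prim unfolding computable_def by blast
qed (auto simp: assms(3) length_Suc_conv)

lemma computable_add:
  assumes "computable Or k A" "computable Or k B"
  shows "computable Or k (\<lambda>xs. A xs + B xs)"
proof -
  have "computable Or (Suc (Suc 0)) (\<lambda>xs. xs ! 0 + xs ! 1)"
  proof (rule computable_prim_recI)
    show "prim_rec (\<lambda>ys. ys ! 0) (\<lambda>ys. Suc (ys ! 1)) n xs = (n # xs) ! 0 + (n # xs) ! 1"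
      if "length xs = Suc 0" for n xs
      using that by (induction n) auto
  qed (auto intro: computable_proj computable_Suc)
  from computable_comp2[OF this assms] show ?thesis by simp
qed

lemma computable_mult:
  assumes "computable Or k A" "computable Or k B"
  shows "computable Or k (\<lambda>xs. A xs * B xs)"
proof -
  have "computable Or (Suc (Suc 0)) (\<lambda>xs. xs ! 0 * xs ! 1)"
  proof (rule computable_prim_recI)
    show "prim_rec (\<lambda>_. 0) (\<lambda>ys. ys ! 1 + ys ! 2) n xs = (n # xs) ! 0 * (n # xs) ! 1"
      if "length xs = Suc 0" for n xs
      using that by (induction n) auto
  qed (auto intro!: computable_const computable_add computable_proj)
  from computable_comp2[OF this assms] show ?thesis by simp
qed

lemma computable_diff:
  assumes "computable Or k A" "computable Or k B"
  shows "computable Or k (\<lambda>xs. A xs - B xs)"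
proof -
  have pred: "computable Or (Suc 0) (\<lambda>xs. xs ! 0 - 1)"
  proof (rule computable_prim_recI)
    show "prim_rec (\<lambda>_. 0) (\<lambda>ys. ys ! 0) n xs = (n # xs) ! 0 - 1" for n xs
      by (cases n) simp_all
  qed (rule computable_const, rule computable_proj, simp)
  have "computable Or (Suc (Suc 0)) (\<lambda>xs. xs ! 1 - xs ! 0)"
  proof (rule computable_prim_recI)
    show "prim_rec (\<lambda>ys. ys ! 0) (\<lambda>ys. ys ! 1 - 1) n xs = (n # xs) ! 1 - (n # xs) ! 0"
      if "length xs = Suc 0" for n xs
      using that by (induction n) auto
  qed (simp_all add: computable_proj computable_comp1[OF pred, simplified])
  from computable_comp2[OF this assms(2,1)] show ?thesis by simp
qed

lemma computable_drop_second:
  assumes "computable Or (Suc k) F"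
  shows "computable Or (Suc (Suc k)) (\<lambda>ys. F (ys ! 0 # drop 2 ys))"
proof -
  define Gs :: "(nat list \<Rightarrow> nat) list"
    where "Gs = map (\<lambda>j ys. ys ! (if j = 0 then 0 else Suc j)) [0..<Suc k]"
  have "computable Or (length Gs) F"
    using assms by (simp add: Gs_def)
  moreover have "computable Or (Suc (Suc k)) G" if "G \<in> set Gs" for G
    using that by (auto simp: Gs_def intro!: computable_proj)
  ultimately have comp: "computable Or (Suc (Suc k)) (\<lambda>ys. F (map (\<lambda>G. G ys) Gs))"
    by (rule computable_comp[of Or Gs F])
  have "map (\<lambda>G. G ys) Gs = ys ! 0 # drop 2 ys" if "length ys = Suc (Suc k)" for ys
    using that by (intro nth_equalityI) (auto simp: Gs_def nth_Cons' simp del: upt_Suc)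
  then show ?thesis
    by (intro computable_cong[OF comp]) simp
qed

lemma computable_sum:
  assumes "computable Or k N" "computable Or (Suc k) F"
  shows "computable Or k (\<lambda>xs. \<Sum>i<N xs. F (i # xs))"
proof -
  have "computable Or (Suc k) (\<lambda>xs. \<Sum>i<hd xs. F (i # tl xs))"
  proof (rule computable_prim_recI)
    show "prim_rec (\<lambda>_. 0) (\<lambda>ys. ys ! 1 + F (ys ! 0 # drop 2 ys)) n xs = (\<Sum>i<hd (n # xs). F (i # tl (n # xs)))"
      for n xs
      by (induction n) auto
  qed (auto intro!: computable_const computable_add computable_proj computable_drop_second assms(2))
  from computable_comp_Cons[OF this assms(1)] show ?thesis by simp
qed

lemma computable_prod:
  assumes "computable Or k N" "computable Or (Suc k) F"
  shows "computable Or k (\<lambda>xs. \<Prod>i<N xs. F (i # xs))"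
proof -
  have "computable Or (Suc k) (\<lambda>xs. \<Prod>i<hd xs. F (i # tl xs))"
  proof (rule computable_prim_recI)
    show "prim_rec (\<lambda>_. 1) (\<lambda>ys. ys ! 1 * F (ys ! 0 # drop 2 ys)) n xs = (\<Prod>i<hd (n # xs). F (i # tl (n # xs)))"
      for n xs
      by (induction n) auto
  qed (auto intro!: computable_const computable_mult computable_proj computable_drop_second assms(2))
  from computable_comp_Cons[OF this assms(1)] show ?thesis by simp
qed

lemma computable_of_bool_not:
  assumes "computable Or k (\<lambda>xs. of_bool (P xs))"
  shows "computable Or k (\<lambda>xs. of_bool (\<not> P xs))"
  by (rule computable_cong[OF computable_diff[OF computable_const assms, of 1]]) simp

lemma computable_of_bool_conj:
  assumes "computable Or k (\<lambda>xs. of_bool (P xs))" "computable Or k (\<lambda>xs. of_bool (Q xs))"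
  shows "computable Or k (\<lambda>xs. of_bool (P xs \<and> Q xs))"
  by (rule computable_cong[OF computable_mult[OF assms]]) simp

lemma computable_of_bool_eq:
  assumes "computable Or k A" "computable Or k B"
  shows "computable Or k (\<lambda>xs. of_bool (A xs = B xs))"
  \<comment> \<open>with truncated subtraction, A = B iff (A - B) + (B - A) = 0\<close>
  by (rule computable_cong[where F = "\<lambda>xs. 1 - ((A xs - B xs) + (B xs - A xs))"])
    (auto intro!: computable_diff computable_add computable_const assms)

lemma computable_of_bool_bex:
  assumes "computable Or k N" "computable Or (Suc k) (\<lambda>xs. of_bool (P xs))"
  shows "computable Or k (\<lambda>xs. of_bool (\<exists>i<N xs. P (i # xs)))"
proof (rule computable_cong)
  show "computable Or k (\<lambda>xs. 1 - (1 - (\<Sum>i<N xs. of_bool (P (i # xs)))))"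
    by (intro computable_diff computable_const computable_sum assms)
  show "(1::nat) - (1 - (\<Sum>i<N xs. of_bool (P (i # xs)))) = of_bool (\<exists>i<N xs. P (i # xs))" for xs
  proof (cases "\<exists>i<N xs. P (i # xs)")
    case True
    then obtain i where "i < N xs" "P (i # xs)" by blast
    then have "1 \<le> (\<Sum>i<N xs. of_bool (P (i # xs)) :: nat)"
      using member_le_sum[of i "{..<N xs}" "\<lambda>i. of_bool (P (i # xs)) :: nat"] by simp
    then show ?thesis using True by simp
  qed simp
qed

lemma computable_if:
  assumes "computable Or k (\<lambda>xs. of_bool (P xs))" "computable Or k A" "computable Or k B"
  shows "computable Or k (\<lambda>xs. if P xs then A xs else B xs)"
  by (rule computable_cong[where F = "\<lambda>xs. of_bool (P xs) * A xs + of_bool (\<not> P xs) * B xs"])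
    (auto intro!: computable_add computable_mult computable_of_bool_not assms)

lemma computable_power2:
  assumes "computable Or k A"
  shows "computable Or k (\<lambda>xs. 2 ^ A xs)"
  using computable_prod[OF assms computable_const[of Or "Suc k" 2]] by simp

lemma computable_prod_encode:
  assumes "computable Or k A" "computable Or k B"
  shows "computable Or k (\<lambda>xs. prod_encode (A xs, B xs))"
proof -
  have "triangle n = (\<Sum>i<n. Suc i)" for n
    by (induction n) simp_all
  then show ?thesis
    using computable_sum[OF computable_add[OF assms] computable_Suc[OF computable_proj[of 0 "Suc k" Or]]]
    by (auto simp: prod_encode_def intro!: computable_add assms)
qed

lemma partial_comp_str_search:
  assumes "computable Or (Suc (Suc 0)) F"
  shows "partial_comp_str Or (\<lambda>x. if \<exists>n. F [n, enc x] = 0 then Some [] else None)"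
proof -
  obtain r where r: "computes Or (Suc (Suc 0)) r F"
    using assms unfolding computable_def by blast
  have "(\<exists>n. evalr Or (Mn r) [i] n) \<longleftrightarrow> (\<exists>n. F [n, i] = 0)" for i
    using evalr_Mn_iff[OF r, of "[i]"] exists_least_iff[of "\<lambda>n. F [n, i] = 0"] by auto
  moreover have "evalr Or (Comp Zf [Mn r]) xs y \<longleftrightarrow> y = 0 \<and> (\<exists>n. evalr Or (Mn r) xs n)" for xs y
    by (auto elim!: evalr_CompE evalr_ZfE simp: list_all2_Cons1 intro!: evalr.comp evalr.zero)
  ultimately show ?thesis
    unfolding partial_comp_str_def by (intro exI[of _ "Comp Zf [Mn r]"]) auto
qed

lemma total_comp_str_nat_nat_iff_computable:
  "total_comp_str_nat_nat Or F \<longleftrightarrow> computable Or (Suc (Suc 0)) (\<lambda>xs. F (dec (xs ! 0)) (xs ! 1))"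
proof
  assume "total_comp_str_nat_nat Or F"
  then obtain r where r: "\<And>x t y. evalr Or r [enc x, t] y \<longleftrightarrow> y = F x t"
    unfolding total_comp_str_nat_nat_def by blast
  have "computes Or (Suc (Suc 0)) r (\<lambda>xs. F (dec (xs ! 0)) (xs ! 1))"
    unfolding computes_def by (auto simp: length_Suc_conv r[of "dec _", simplified])
  then show "computable Or (Suc (Suc 0)) (\<lambda>xs. F (dec (xs ! 0)) (xs ! 1))"
    unfolding computable_def by blast
next
  assume "computable Or (Suc (Suc 0)) (\<lambda>xs. F (dec (xs ! 0)) (xs ! 1))"
  then obtain r where "computes Or (Suc (Suc 0)) r (\<lambda>xs. F (dec (xs ! 0)) (xs ! 1))"
    unfolding computable_def by blast
  then have "evalr Or r [enc x, t] y \<longleftrightarrow> y = F x t" for x t y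
    by (simp add: computesD)
  then show "total_comp_str_nat_nat Or F"
    unfolding total_comp_str_nat_nat_def by blast
qed

section \<open>Oracle-free programs\<close>

fun erase_oracle :: "recf \<Rightarrow> recf" where
  "erase_oracle Zf = Zf"
| "erase_oracle Sf = Sf"
| "erase_oracle (Proj i) = Proj i"
| "erase_oracle (Comp f gs) = Comp (erase_oracle f) (map erase_oracle gs)"
| "erase_oracle (Prim f g) = Prim (erase_oracle f) (erase_oracle g)"
| "erase_oracle (Mn f) = Mn (erase_oracle f)"
| "erase_oracle Orc = Comp Zf [Proj 0]"

lemma evalr_erase_oracle: "evalr no_oracle r xs y \<Longrightarrow> evalr Or (erase_oracle r) xs y"
proof (induction rule: evalr.induct)
  case (zero xs) then show ?case by (auto intro: evalr.zero)
next
  case (succ x xs) then show ?case by (auto intro: evalr.succ)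
next
  case (proj i xs) then show ?case by (auto intro: evalr.proj)
next
  case (orc x xs)
  have "evalr Or (Proj 0) (x # xs) x" using evalr.proj[of 0 "x # xs" Or] by simp
  then have "list_all2 (\<lambda>g y. evalr Or g (x # xs) y) [Proj 0] [x]" by simp
  then show ?case by (auto simp: no_oracle_def intro: evalr.comp evalr.zero)
next
  case (comp xs gs ys f z)
  have "list_all2 (\<lambda>g y. evalr Or g xs y) (map erase_oracle gs) ys"
    using comp(1) by (auto simp: list_all2_map1 elim: list_all2_mono)
  then show ?case using comp by (auto intro: evalr.comp)
next
  case (prim0 f xs y g) then show ?case by (auto intro: evalr.prim0)
next
  case (primS f g n xs y z) then show ?case by (auto intro: evalr.primS)
next
  case (mn f n xs) then show ?case by (auto intro: evalr.mn)
qed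

lemma evalr_erased_Orc:
  assumes "evalr Or (Comp Zf [Proj 0]) xs z"
  shows "evalr no_oracle Orc xs z"
proof -
  obtain x xs' where "xs = x # xs'"
    using assms by (auto elim!: evalr_CompE evalr_ProjE simp: list_all2_Cons1 neq_Nil_conv)
  moreover have "z = 0"
    using assms by (auto elim!: evalr_CompE evalr_ZfE)
  ultimately show ?thesis
    using evalr.orc[of no_oracle x xs'] by (simp add: no_oracle_def)
qed

lemma evalr_erase_oracleD: "evalr Or r' xs y \<Longrightarrow> (\<And>r. r' = erase_oracle r \<Longrightarrow> evalr no_oracle r xs y)"
proof (induction arbitrary: rule: evalr.induct)
  case (zero xs) then show ?case by (cases r) (auto intro: evalr.zero)
next
  case (succ x xs) then show ?case by (cases r) (auto intro: evalr.succ)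
next
  case (proj i xs) then show ?case by (cases r) (auto intro: evalr.proj)
next
  case (orc x xs) then show ?case by (cases r) auto
next
  case (comp xs gs ys f z)
  show ?case
  proof (cases r)
    case Orc
    have "list_all2 (\<lambda>g y. evalr Or g xs y) gs ys"
      using comp(1) by (rule list_all2_mono) simp
    then have "evalr Or (Comp f gs) xs z"
      using comp(3) by (rule evalr.comp)
    then show ?thesis
      using comp.prems Orc by (auto intro: evalr_erased_Orc)
  next
    case (Comp f0 gs0)
    then have fg: "f = erase_oracle f0" "gs = map erase_oracle gs0" using comp.prems by auto
    have "list_all2 (\<lambda>g y. evalr no_oracle g xs y) gs0 ys"
      using comp(1) fg by (auto simp: list_all2_map1 elim: list_all2_mono)
    then show ?thesis using comp fg Comp by (auto intro: evalr.comp)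
  qed (use comp.prems in auto)
next
  case (prim0 f xs y g) then show ?case by (cases r) (auto intro: evalr.prim0)
next
  case (primS f g n xs y z)
  then show ?case
  proof (cases r)
    case (Prim f0 g0)
    then show ?thesis using primS by (auto intro!: evalr.primS[of no_oracle f0 g0 n xs y])
  qed auto
next
  case (mn f n xs)
  then show ?case
  proof (cases r)
    case (Mn f0)
    then have f: "f = erase_oracle f0" using mn by auto
    have a: "evalr no_oracle f0 (n # xs) 0" using mn f by blast
    have b: "\<forall>m<n. \<exists>k. evalr no_oracle f0 (m # xs) (Suc k)" using mn(3) f by blast
    show ?thesis using Mn evalr.mn[OF a b] by simp
  qed auto
qed

lemma evalr_erase_oracle_iff: "evalr Or (erase_oracle r) xs y \<longleftrightarrow> evalr no_oracle r xs y"
  using evalr_erase_oracle evalr_erase_oracleD by blast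

lemma total_comp_str_nat_nat_relativize:
  "total_comp_str_nat_nat no_oracle F \<Longrightarrow> total_comp_str_nat_nat Or F"
  unfolding total_comp_str_nat_nat_def by (metis evalr_erase_oracle_iff)

lemma lower_semicomp_relativize: "lower_semicomp no_oracle p \<Longrightarrow> lower_semicomp Or p"
  unfolding lower_semicomp_def using total_comp_str_nat_nat_relativize by blast

section \<open>The halting sequence decides instability\<close>

definition unstable :: "(bool list \<Rightarrow> nat \<Rightarrow> bool list) \<Rightarrow> bool list \<Rightarrow> nat \<Rightarrow> bool" where
  "unstable g x t \<longleftrightarrow> (\<exists>t'\<ge>t. g x t' \<noteq> g x t)"

lemma stable_values_eq: "\<not> unstable g x t1 \<Longrightarrow> \<not> unstable g x t2 \<Longrightarrow> g x t1 = g x t2"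
  unfolding unstable_def by (metis nle_le)

definition query_code :: "bool list \<Rightarrow> nat \<Rightarrow> bool list" where
  "query_code x t = replicate (prod_encode (enc x, t)) False @ [True]"

lemma enc_query_code: "enc (query_code x t) = 3 * 2 ^ prod_encode (enc x, t) - 1"
  unfolding query_code_def by (rule enc_replicate_False_True)

lemma replicate_False_True_prefix:
  "replicate a False @ [True] = replicate b False @ [True] @ r \<Longrightarrow> a = b \<and> r = []"
proof (induction a arbitrary: b)
  case 0
  then show ?case by (cases b) simp_all
next
  case (Suc a)
  show ?case
  proof (cases b)
    case 0
    then show ?thesis using Suc.prems by simp
  next
    case (Suc b')
    then have "replicate a False @ [True] = replicate b' False @ [True] @ r"
      using Suc.prems by simp
    then show ?thesis using Suc.IH Suc by blast
  qed
qed

lemma query_code_inject: "query_code x t = query_code x' t' \<longleftrightarrow> x = x' \<and> t = t'"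
proof
  assume "query_code x t = query_code x' t'"
  then have "prod_encode (enc x, t) = prod_encode (enc x', t')"
    unfolding query_code_def by (metis append_Nil2 replicate_False_True_prefix)
  then show "x = x' \<and> t = t'"
    by (simp add: prod_encode_eq)
qed simp

definition instability_machine :: "(bool list \<Rightarrow> nat \<Rightarrow> bool list) \<Rightarrow> bool list \<Rightarrow> bool list option" where
  "instability_machine g s = (if \<exists>x t. s = query_code x t \<and> unstable g x t then Some [] else None)"

lemma prefix_free_dom_instability_machine: "prefix_free_dom (instability_machine g)"
  unfolding prefix_free_dom_def
proof (intro allI impI)
  fix p q
  assume "instability_machine g p \<noteq> None" "instability_machine g q \<noteq> None" "\<exists>r. q = p @ r"
  then obtain x t x' t' r where "p = query_code x t" "q = query_code x' t'" "q = p @ r"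
    unfolding instability_machine_def by (auto split: if_splits)
  then have "r = []"
    unfolding query_code_def by (metis append_assoc replicate_False_True_prefix)
  then show "p = q"
    using \<open>q = p @ r\<close> by simp
qed

lemma ex_less_common_bound:
  "(\<exists>j. \<exists>i<j. \<exists>t<j. \<exists>d<j. P i t d) \<longleftrightarrow> (\<exists>i t d :: nat. P i t d)"
proof
  assume "\<exists>i t d. P i t d"
  then obtain i t d where "P i t d" by blast
  moreover have "i < Suc (i + t + d)" "t < Suc (i + t + d)" "d < Suc (i + t + d)"
    by simp_all
  ultimately show "\<exists>j. \<exists>i<j. \<exists>t<j. \<exists>d<j. P i t d"
    by blast
qed blast

lemma instability_witness_iff:
  "(\<exists>j. \<exists>i<j. \<exists>t<j. \<exists>d<j. enc s = 3 * 2 ^ prod_encode (i, t) - 1 \<and>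
      enc (g (dec i) (t + d)) \<noteq> enc (g (dec i) t)) \<longleftrightarrow>
    (\<exists>x t. s = query_code x t \<and> unstable g x t)"
  unfolding ex_less_common_bound
proof
  assume "\<exists>i t d. enc s = 3 * 2 ^ prod_encode (i, t) - 1 \<and> enc (g (dec i) (t + d)) \<noteq> enc (g (dec i) t)"
  then obtain i t d where "enc s = enc (query_code (dec i) t)" "g (dec i) (t + d) \<noteq> g (dec i) t"
    by (auto simp: enc_query_code)
  then show "\<exists>x t. s = query_code x t \<and> unstable g x t"
    unfolding unstable_def by (metis enc_eq_iff le_add1)
next
  assume "\<exists>x t. s = query_code x t \<and> unstable g x t"
  then obtain x t t' where "s = query_code x t" "t' \<ge> t" "g x t' \<noteq> g x t"
    unfolding unstable_def by blast
  then have "enc s = 3 * 2 ^ prod_encode (enc x, t) - 1 \<and>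
      enc (g (dec (enc x)) (t + (t' - t))) \<noteq> enc (g (dec (enc x)) t)"
    by (simp add: enc_query_code)
  then show "\<exists>i t d. enc s = 3 * 2 ^ prod_encode (i, t) - 1 \<and> enc (g (dec i) (t + d)) \<noteq> enc (g (dec i) t)"
    by blast
qed

lemma partial_comp_str_instability_machine:
  assumes "total_comp_str_nat_nat no_oracle (\<lambda>x t. enc (g x t))"
  shows "partial_comp_str no_oracle (instability_machine g)"
proof -
  note computable_g = computable_comp2_fun[OF assms[unfolded total_comp_str_nat_nat_iff_computable]]
  have "computable no_oracle (Suc 4) (\<lambda>xs. of_bool (xs ! 4 = 3 * 2 ^ prod_encode (xs ! 2, xs ! 1) - 1 \<and>
      \<not> enc (g (dec (xs ! 2)) (xs ! 1 + xs ! 0)) = enc (g (dec (xs ! 2)) (xs ! 1))))"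
    by (intro computable_of_bool_conj computable_of_bool_not computable_of_bool_eq computable_diff
        computable_mult computable_power2 computable_prod_encode computable_add computable_const
        computable_proj computable_g) simp_all
  from computable_of_bool_bex[OF computable_proj[of 2 4, simplified] this]
  have "computable no_oracle (Suc 3) (\<lambda>xs. of_bool (\<exists>d<xs ! 2.
      xs ! 3 = 3 * 2 ^ prod_encode (xs ! 1, xs ! 0) - 1 \<and>
      enc (g (dec (xs ! 1)) (xs ! 0 + d)) \<noteq> enc (g (dec (xs ! 1)) (xs ! 0))))"
    by simp
  from computable_of_bool_bex[OF computable_proj[of 1 3, simplified] this]
  have "computable no_oracle (Suc 2) (\<lambda>xs. of_bool (\<exists>t<xs ! 1. \<exists>d<xs ! 1.
      xs ! 2 = 3 * 2 ^ prod_encode (xs ! 0, t) - 1 \<and>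
      enc (g (dec (xs ! 0)) (t + d)) \<noteq> enc (g (dec (xs ! 0)) t)))"
    by simp
  from computable_of_bool_bex[OF computable_proj[of 0 2, simplified] this]
  have "computable no_oracle (Suc (Suc 0)) (\<lambda>xs. of_bool (\<exists>i<xs ! 0. \<exists>t<xs ! 0. \<exists>d<xs ! 0.
      xs ! 1 = 3 * 2 ^ prod_encode (i, t) - 1 \<and> enc (g (dec i) (t + d)) \<noteq> enc (g (dec i) t)))"
    by (simp add: numeral_eq_Suc)
  from partial_comp_str_search[OF computable_of_bool_not[OF this]]
  have "partial_comp_str no_oracle (\<lambda>s. if \<exists>j. \<exists>i<j. \<exists>t<j. \<exists>d<j.
      enc s = 3 * 2 ^ prod_encode (i, t) - 1 \<and> enc (g (dec i) (t + d)) \<noteq> enc (g (dec i) t)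
      then Some [] else None)"
    by (rule back_subst[where P = "partial_comp_str no_oracle"]) (auto simp: fun_eq_iff)
  then show ?thesis
    unfolding instability_machine_def instability_witness_iff .
qed

lemma total_comp_str_nat_nat_halting_seq_unstable:
  assumes U: "universal_pf_machine U"
    and g: "total_comp_str_nat_nat no_oracle (\<lambda>x t. enc (g x t))"
  shows "total_comp_str_nat_nat (halting_seq U) (\<lambda>x t. of_bool (unstable g x t))"
proof -
  obtain w where w: "\<And>s. U (w @ s) = instability_machine g s"
    using U partial_comp_str_instability_machine[OF g] prefix_free_dom_instability_machine
    unfolding universal_pf_machine_def by blast
  have "halting_seq U (enc w + 2 ^ length w * (3 * 2 ^ prod_encode (i, t) - 1)) \<longleftrightarrow> unstable g (dec i) t"
    for i t
  proof -
    have "enc (w @ query_code (dec i) t) = enc w + 2 ^ length w * (3 * 2 ^ prod_encode (i, t) - 1)"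
      by (simp add: enc_append enc_query_code)
    then show ?thesis
      using w[of "query_code (dec i) t"]
      by (metis halting_seq_def dec_enc instability_machine_def query_code_inject option.distinct(1))
  qed
  moreover have "computable (halting_seq U) (Suc (Suc 0)) (\<lambda>xs. of_bool (halting_seq U
      (enc w + 2 ^ length w * (3 * 2 ^ prod_encode (xs ! 0, xs ! 1) - 1))))"
    by (intro computable_oracle computable_add computable_mult computable_diff computable_power2
        computable_prod_encode computable_const computable_proj) simp_all
  ultimately show ?thesis
    unfolding total_comp_str_nat_nat_iff_computable by simp
qed

section \<open>Lower semicomputability of the mass of stable preimages\<close>

lemma sum_divide_common_denominator:
  fixes c d :: "'i \<Rightarrow> real"
  assumes "finite I" "\<And>i. i \<in> I \<Longrightarrow> d i \<noteq> 0"
  shows "(\<Sum>i\<in>I. c i * (\<Prod>j\<in>I. if j = i then 1 else d j)) / (\<Prod>j\<in>I. d j) = (\<Sum>i\<in>I. c i / d i)"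
proof -
  have nz: "(\<Prod>j\<in>I. d j) \<noteq> 0"
    using assms by simp
  have "(\<Prod>j\<in>I. if j = i then 1 else d j) = (\<Prod>j\<in>I. d j) / d i" if "i \<in> I" for i
  proof -
    have "(\<Prod>j\<in>I. if j = i then 1 else d j) = (\<Prod>j\<in>I - {i}. d j)"
      using that assms(1) by (simp add: prod.remove[of I i])
    also have "\<dots> = (\<Prod>j\<in>I. d j) / d i"
      using that assms by (simp add: prod.remove[of I i])
    finally show ?thesis .
  qed
  then show ?thesis
    unfolding sum_divide_distrib using assms(2) nz by (intro sum.cong) simp_all
qed

definition stable_preimage :: "(bool list \<Rightarrow> nat \<Rightarrow> bool list) \<Rightarrow> bool list \<Rightarrow> bool list set" where
  "stable_preimage g z = {x. \<exists>t. \<not> unstable g x t \<and> g x t = z}"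

lemma disjoint_family_stable_preimage: "disjoint_family (stable_preimage g)"
  unfolding disjoint_family_on_def stable_preimage_def using stable_values_eq by blast

definition seen_stable :: "(bool list \<Rightarrow> nat \<Rightarrow> bool list) \<Rightarrow> bool list \<Rightarrow> nat \<Rightarrow> nat \<Rightarrow> bool" where
  "seen_stable g z s i \<longleftrightarrow> i \<noteq> 0 \<and> (\<exists>t<s. \<not> unstable g (dec i) t \<and> g (dec i) t = z)"

lemma computable_seen_stable:
  assumes g: "total_comp_str_nat_nat Or (\<lambda>x t. enc (g x t))"
    and unstable: "total_comp_str_nat_nat Or (\<lambda>x t. of_bool (unstable g x t))"
  shows "computable Or 3 (\<lambda>xs. of_bool (seen_stable g (dec (xs ! 1)) (xs ! 2) (xs ! 0)))"
proof -
  note computable_G = computable_comp2_fun[OF g[unfolded total_comp_str_nat_nat_iff_computable]]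
  note computable_U = computable_comp2_fun[OF unstable[unfolded total_comp_str_nat_nat_iff_computable]]
  have "computable Or (Suc 3) (\<lambda>xs. of_bool (\<not> unstable g (dec (xs ! 1)) (xs ! 0) \<and>
      enc (g (dec (xs ! 1)) (xs ! 0)) = xs ! 2))"
    by (intro computable_of_bool_conj computable_of_bool_not computable_of_bool_eq computable_U
        computable_G computable_proj) simp_all
  from computable_of_bool_bex[OF computable_proj[of 2 3, simplified] this]
  have "computable Or 3 (\<lambda>xs. of_bool (\<exists>t<xs ! 2. \<not> unstable g (dec (xs ! 0)) t \<and>
      enc (g (dec (xs ! 0)) t) = xs ! 1))"
    by simp
  then have "computable Or 3 (\<lambda>xs. of_bool (\<not> xs ! 0 = 0 \<and> (\<exists>t<xs ! 2. \<not> unstable g (dec (xs ! 0)) t \<and>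
      enc (g (dec (xs ! 0)) t) = xs ! 1)))"
    by (intro computable_of_bool_conj computable_of_bool_not computable_of_bool_eq computable_proj
        computable_const) simp_all
  then show ?thesis
    by (rule computable_cong) (auto simp: seen_stable_def enc_eq_iff_eq_dec)
qed

lemma total_comp_str_nat_nat_sum_of_ratios:
  assumes a: "total_comp_str_nat_nat Or a" and b: "total_comp_str_nat_nat Or b"
    and P: "computable Or 3 (\<lambda>xs. of_bool (P (dec (xs ! 1)) (xs ! 2) (xs ! 0)))"
  obtains a' b' where "total_comp_str_nat_nat Or a'" "total_comp_str_nat_nat Or b'"
    "\<And>z s. real (a' z s) / real (b' z s + 1) =
      (\<Sum>i<s. of_bool (P z s i) * (real (a (dec i) s) / real (b (dec i) s + 1)))"
proof
  define den where "den s = (\<Prod>j<s. b (dec j) s + 1)" for s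
  define num where "num z s = (\<Sum>i<s. of_bool (P z s i) * a (dec i) s *
    (\<Prod>j<s. if j = i then 1 else b (dec j) s + 1))" for z s
  note computable_a = computable_comp2_fun[OF a[unfolded total_comp_str_nat_nat_iff_computable]]
  note computable_b = computable_comp2_fun[OF b[unfolded total_comp_str_nat_nat_iff_computable]]
  have "computable Or (Suc 3) (\<lambda>xs. if xs ! 0 = xs ! 1 then 1 else b (dec (xs ! 0)) (xs ! 3) + 1)"
    by (intro computable_if computable_of_bool_eq computable_add computable_b computable_proj
        computable_const) simp_all
  from computable_prod[OF computable_proj[of 2 3, simplified] this]
  have "computable Or 3 (\<lambda>xs. \<Prod>j<xs ! 2. if j = xs ! 0 then 1 else b (dec j) (xs ! 2) + 1)"
    by (simp cong: if_cong)
  then have "computable Or 3 (\<lambda>xs. of_bool (P (dec (xs ! 1)) (xs ! 2) (xs ! 0)) * a (dec (xs ! 0)) (xs ! 2) *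
      (\<Prod>j<xs ! 2. if j = xs ! 0 then 1 else b (dec j) (xs ! 2) + 1))"
    by (intro computable_mult computable_a computable_proj P) simp_all
  from computable_sum[OF computable_proj[of 1 "Suc (Suc 0)", simplified] this[unfolded numeral_3_eq_3]]
  show "total_comp_str_nat_nat Or num"
    unfolding total_comp_str_nat_nat_iff_computable num_def by (simp add: numeral_2_eq_2 cong: if_cong)
  have "computable Or (Suc (Suc (Suc 0))) (\<lambda>xs. b (dec (xs ! 0)) (xs ! 2) + 1)"
    by (intro computable_add computable_b computable_proj computable_const) simp_all
  from computable_prod[OF computable_proj[of 1 "Suc (Suc 0)", simplified] this]
  have "computable Or (Suc (Suc 0)) (\<lambda>xs. den (xs ! 1))"
    by (simp add: den_def)
  from computable_diff[OF this computable_const]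
  show "total_comp_str_nat_nat Or (\<lambda>z s. den s - 1)"
    unfolding total_comp_str_nat_nat_iff_computable .
  fix z s
  have "real (den s - 1 + 1) = (\<Prod>j<s. real (b (dec j) s) + 1)"
    by (simp add: den_def Suc_leI prod_pos add.commute)
  moreover have "real (num z s) = (\<Sum>i<s. of_bool (P z s i) * real (a (dec i) s) *
      (\<Prod>j<s. if j = i then 1 else real (b (dec j) s) + 1))"
    by (simp add: num_def of_nat_prod if_distrib add.commute cong: if_cong)
  ultimately show "real (num z s) / real (den s - 1 + 1) =
      (\<Sum>i<s. of_bool (P z s i) * (real (a (dec i) s) / real (b (dec i) s + 1)))"
    using sum_divide_common_denominator[of "{..<s}" "\<lambda>j. real (b (dec j) s) + 1"
        "\<lambda>i. of_bool (P z s i) * real (a (dec i) s)"]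
    by (simp add: add.commute)
qed

lemma tendsto_diagonal_sum:
  fixes w :: "nat \<Rightarrow> nat \<Rightarrow> real"
  assumes w_nonneg: "\<And>i s. 0 \<le> w i s" and w_le: "\<And>i s. w i s \<le> f i"
    and w_lim: "\<And>i. (\<lambda>s. w i s) \<longlonglongrightarrow> f i" and f: "(f has_sum S) UNIV"
  shows "(\<lambda>s. \<Sum>i<s. w i s) \<longlonglongrightarrow> S"
proof (rule LIMSEQ_I)
  fix e :: real
  assume "0 < e"
  obtain F where F: "finite F" "dist (sum f F) S \<le> e / 2"
    using has_sum_finite_approximation[OF f, of "e / 2"] \<open>0 < e\<close> by auto
  have "(\<lambda>s. \<Sum>i\<in>F. w i s) \<longlonglongrightarrow> (\<Sum>i\<in>F. f i)"
    by (rule tendsto_sum) (rule w_lim)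
  then obtain N1 where N1: "\<And>s. s \<ge> N1 \<Longrightarrow> dist (\<Sum>i\<in>F. w i s) (\<Sum>i\<in>F. f i) < e / 2"
    using \<open>0 < e\<close> unfolding tendsto_iff eventually_sequentially by (metis half_gt_zero)
  obtain N2 where N2: "F \<subseteq> {..<N2}"
    using F(1) finite_nat_iff_bounded by auto
  show "\<exists>N. \<forall>s\<ge>N. norm ((\<Sum>i<s. w i s) - S) < e"
  proof (intro exI allI impI)
    fix s
    assume s: "max N1 N2 \<le> s"
    have "(\<Sum>i<s. w i s) \<le> (\<Sum>i<s. f i)"
      by (rule sum_mono) (rule w_le)
    also have "\<dots> \<le> S"
      using f by (rule finite_sum_le_has_sum) (auto intro: order_trans[OF w_nonneg w_le])
    finally have upper: "(\<Sum>i<s. w i s) \<le> S" .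
    have "(\<Sum>i\<in>F. w i s) \<le> (\<Sum>i<s. w i s)"
      using N2 s by (intro sum_mono2) (auto intro: w_nonneg)
    moreover have "\<bar>(\<Sum>i\<in>F. w i s) - (\<Sum>i\<in>F. f i)\<bar> < e / 2"
      using N1[of s] s by (simp add: dist_real_def)
    ultimately have "S - e < (\<Sum>i<s. w i s)"
      using F(2) unfolding dist_real_def by linarith
    with upper show "norm ((\<Sum>i<s. w i s) - S) < e"
      using \<open>0 < e\<close> by simp
  qed
qed

lemma semimeasure_summable: "semimeasure m \<Longrightarrow> m summable_on UNIV"
  unfolding semimeasure_def by (metis insert_Diff_single insert_UNIV summable_on_insert_iff)

lemma has_sum_restrict_dec:
  fixes m :: "bool list \<Rightarrow> real"
  assumes "(m has_sum S) A"
  shows "((\<lambda>i. of_bool (dec i \<in> A) * m (dec i)) has_sum S) UNIV"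
proof -
  have "(m has_sum S) A \<longleftrightarrow> ((\<lambda>x. of_bool (x \<in> A) * m x) has_sum S) UNIV"
    by (rule has_sum_cong_neutral) auto
  then have "((\<lambda>x. of_bool (x \<in> A) * m x) has_sum S) UNIV"
    using assms by blast
  then show ?thesis
    using has_sum_reindex_bij_betw[OF bij_dec, of "\<lambda>x. of_bool (x \<in> A) * m x" S] by simp
qed

lemma enumerated_mass_approximation:
  fixes m :: "bool list \<Rightarrow> real" and r :: "bool list \<Rightarrow> nat \<Rightarrow> real"
  assumes r: "\<And>x. incseq (r x)" "\<And>x. r x \<longlonglongrightarrow> m x" "\<And>x t. 0 \<le> r x t"
    and seen_Suc: "\<And>s i. seen s i \<Longrightarrow> seen (Suc s) i"
    and seen_iff: "\<And>i. dec i \<in> A \<longleftrightarrow> (\<exists>s. seen s i)"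
    and summable: "m summable_on A"
  shows "incseq (\<lambda>s. \<Sum>i<s. of_bool (seen s i) * r (dec i) s)"
    and "(\<lambda>s. \<Sum>i<s. of_bool (seen s i) * r (dec i) s) \<longlonglongrightarrow> infsum m A"
proof -
  define w where "w i s = of_bool (seen s i) * r (dec i) s" for i s
  have r_le: "r x t \<le> m x" for x t
    using incseq_le[OF r(1,2)] .
  have seen_mono: "seen s' i" if "seen s i" "s \<le> s'" for s s' i
    using that(2,1) by (induction rule: dec_induct) (auto intro: seen_Suc)
  have w_nonneg: "0 \<le> w i s" for i s
    by (simp add: w_def r(3))
  have "w i s \<le> w i (Suc s)" for i s
    using seen_Suc[of s i] incseq_SucD[OF r(1)] r(3) by (auto simp: w_def)
  then have "(\<Sum>i<s. w i s) \<le> (\<Sum>i<Suc s. w i (Suc s))" for s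
    using w_nonneg[of s "Suc s"] sum_mono[of "{..<s}" "\<lambda>i. w i s" "\<lambda>i. w i (Suc s)"] by simp
  then show "incseq (\<lambda>s. \<Sum>i<s. of_bool (seen s i) * r (dec i) s)"
    unfolding w_def[symmetric] by (rule incseq_SucI)
  define f where "f i = of_bool (dec i \<in> A) * m (dec i)" for i
  have "w i s \<le> f i" for i s
    using seen_iff r_le order_trans[OF r(3) r_le] by (auto simp: w_def f_def)
  moreover have "(\<lambda>s. w i s) \<longlonglongrightarrow> f i" for i
  proof (cases "dec i \<in> A")
    case True
    then obtain s0 where "seen s0 i"
      using seen_iff by blast
    then have "\<forall>\<^sub>F s in sequentially. r (dec i) s = w i s"
      unfolding eventually_sequentially w_def using seen_mono by auto
    moreover have "(\<lambda>s. r (dec i) s) \<longlonglongrightarrow> f i"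
      using r(2) True by (simp add: f_def)
    ultimately show ?thesis
      using tendsto_cong by blast
  next
    case False
    then have "w i = (\<lambda>s. 0)"
      using seen_iff by (intro ext) (simp add: w_def)
    moreover have "f i = 0"
      using False by (simp add: f_def)
    ultimately show ?thesis
      by simp
  qed
  moreover have "(f has_sum infsum m A) UNIV"
    unfolding f_def using summable by (intro has_sum_restrict_dec has_sum_infsum)
  ultimately show "(\<lambda>s. \<Sum>i<s. of_bool (seen s i) * r (dec i) s) \<longlonglongrightarrow> infsum m A"
    unfolding w_def[symmetric] using w_nonneg by (intro tendsto_diagonal_sum)
qed

lemma lower_semicomp_stable_preimage_mass:
  assumes m: "semimeasure m" "lower_semicomp Or m"
    and g: "total_comp_str_nat_nat Or (\<lambda>x t. enc (g x t))"
    and unstable: "total_comp_str_nat_nat Or (\<lambda>x t. of_bool (unstable g x t))"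
  shows "lower_semicomp Or (\<lambda>z. infsum m (stable_preimage g z - {[]}))"
proof -
  obtain a b where a: "total_comp_str_nat_nat Or a" and b: "total_comp_str_nat_nat Or b"
    and approx: "\<And>x. incseq (\<lambda>t. real (a x t) / real (b x t + 1))"
      "\<And>x. (\<lambda>t. real (a x t) / real (b x t + 1)) \<longlonglongrightarrow> m x"
    using m(2) unfolding lower_semicomp_def by blast
  obtain a' b' where a': "total_comp_str_nat_nat Or a'" and b': "total_comp_str_nat_nat Or b'"
    and val: "\<And>z s. real (a' z s) / real (b' z s + 1) =
      (\<Sum>i<s. of_bool (seen_stable g z s i) * (real (a (dec i) s) / real (b (dec i) s + 1)))"
    using total_comp_str_nat_nat_sum_of_ratios[OF a b computable_seen_stable[OF g unstable]] by blast
  have "dec i \<in> stable_preimage g z - {[]} \<longleftrightarrow> (\<exists>s. seen_stable g z s i)" for z i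
    unfolding seen_stable_def stable_preimage_def by (auto intro: lessI)
  moreover have "seen_stable g z s i \<Longrightarrow> seen_stable g z (Suc s) i" for z s i
    unfolding seen_stable_def using less_SucI by blast
  moreover have "m summable_on (stable_preimage g z - {[]})" for z
    using summable_on_subset[OF semimeasure_summable[OF m(1)]] by blast
  ultimately have "incseq (\<lambda>s. real (a' z s) / real (b' z s + 1)) \<and>
      (\<lambda>s. real (a' z s) / real (b' z s + 1)) \<longlonglongrightarrow> infsum m (stable_preimage g z - {[]})" for z
    unfolding val
    using enumerated_mass_approximation[where r = "\<lambda>x t. real (a x t) / real (b x t + 1)" and m = m
        and seen = "seen_stable g z" and A = "stable_preimage g z - {[]}", OF approx]
    by simp
  then show ?thesis
    unfolding lower_semicomp_def using a' b' by blast
qed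

lemma infsum_finite_disjoint_Union:
  fixes m :: "'a \<Rightarrow> real"
  assumes "m summable_on UNIV" "finite F" "disjoint_family_on D F"
  shows "(\<Sum>z\<in>F. infsum m (D z)) = infsum m (\<Union>z\<in>F. D z)"
  using assms(2,3)
proof (induction F rule: finite_induct)
  case (insert z F)
  then have "D z \<inter> (\<Union>z\<in>F. D z) = {}"
    by (fastforce simp: disjoint_family_on_def)
  moreover have "disjoint_family_on D F"
    using insert.prems by (rule disjoint_family_on_mono[rotated]) auto
  ultimately show ?case
    using insert summable_on_subset[OF assms(1)] by (simp add: infsum_Un_disjoint)
qed simp

lemma semimeasure_disjoint_family:
  assumes m: "semimeasure m" and D: "disjoint_family D" "\<And>z. [] \<notin> D z"
  shows "semimeasure (\<lambda>z. infsum m (D z))"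
proof -
  have m_nonneg: "0 \<le> m x" for x
    using m unfolding semimeasure_def by blast
  have finite_sums: "(\<Sum>z\<in>F. infsum m (D z)) \<le> 1" if "finite F" for F
  proof -
    have "(\<Sum>z\<in>F. infsum m (D z)) = infsum m (\<Union>z\<in>F. D z)"
      using semimeasure_summable[OF m] that disjoint_family_on_mono[OF subset_UNIV D(1)]
      by (rule infsum_finite_disjoint_Union)
    also have "\<dots> \<le> infsum m (UNIV - {[]})"
      using D(2) m_nonneg summable_on_subset[OF semimeasure_summable[OF m]]
      by (intro infsum_mono2) auto
    also have "\<dots> \<le> 1"
      using m unfolding semimeasure_def by blast
    finally show ?thesis .
  qed
  have nonneg: "0 \<le> infsum m (D z)" for z
    by (simp add: infsum_nonneg m_nonneg)
  then have "(\<lambda>z. infsum m (D z)) summable_on UNIV - {[]}"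
    by (intro nonneg_bdd_above_summable_on bdd_aboveI[of _ 1]) (auto intro: finite_sums)
  then show ?thesis
    unfolding semimeasure_def using nonneg finite_sums by (auto intro: infsum_le_finite_sums)
qed

lemma universal_semimeasure_pos:
  assumes "universal_semimeasure Or mu"
  shows "0 < mu z0"
proof -
  define q :: "bool list \<Rightarrow> real" where "q z = of_bool (z = z0)" for z
  have finite_sums: "sum q F \<le> 1" if "finite F" for F
    using that by (simp add: q_def of_bool_def sum.delta')
  have nonneg: "0 \<le> q z" for z
    by (simp add: q_def)
  then have "q summable_on UNIV - {[]}"
    by (intro nonneg_bdd_above_summable_on bdd_aboveI[of _ 1]) (auto intro: finite_sums)
  then have "semimeasure q"
    unfolding semimeasure_def using nonneg finite_sums by (auto intro: infsum_le_finite_sums)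
  moreover have "total_comp_str_nat_nat Or (\<lambda>x t. of_bool (x = z0))"
    unfolding total_comp_str_nat_nat_iff_computable
    by (rule computable_cong[OF computable_of_bool_eq[OF computable_proj computable_const, of 0 _ _ "enc z0"]])
      (auto simp: enc_eq_iff_eq_dec)
  moreover have "total_comp_str_nat_nat Or (\<lambda>x t. 0)"
    unfolding total_comp_str_nat_nat_iff_computable by (rule computable_const)
  ultimately have "lower_semicomp Or q \<and> semimeasure q"
    unfolding lower_semicomp_def q_def
    by (intro conjI exI[of _ "\<lambda>x t. of_bool (x = z0)"] exI[of _ "\<lambda>x t. 0"]) auto
  then obtain c where "0 < c" "c * q z0 \<le> mu z0"
    using assms unfolding universal_semimeasure_def by blast
  then show ?thesis
    by (simp add: q_def)
qed

lemma dominated_up_to_finite_exceptions: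
  fixes p q mu :: "'a \<Rightarrow> real"
  assumes "0 < d" "\<And>z. d * p z \<le> mu z" "\<And>z. 0 \<le> p z" "\<And>z. 0 < mu z"
    and "finite E" "0 \<le> M" "\<And>z. q z \<le> p z + (if z \<in> E then M else 0)"
  shows "\<exists>c>0. \<forall>z. c * q z \<le> mu z"
proof -
  define c where "c = Min (insert (d / 2) ((\<lambda>z. mu z / (2 * (M + 1))) ` E))"
  have "0 < c"
    unfolding c_def using assms by (auto simp: Min_gr_iff)
  moreover have "c * q z \<le> mu z" for z
  proof -
    have "c \<le> d / 2"
      unfolding c_def using assms(5) by (intro Min_le) auto
    then have "c * p z \<le> mu z / 2"
      using assms(2)[of z] assms(3)[of z] mult_right_mono[of c "d / 2" "p z"] by linarith
    moreover have "c * M \<le> mu z / 2" if "z \<in> E"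
    proof -
      have "c \<le> mu z / (2 * (M + 1))"
        unfolding c_def using assms(5) that by (intro Min_le) auto
      then have "c * M \<le> mu z / (2 * (M + 1)) * M"
        using assms(6) by (rule mult_right_mono)
      also have "\<dots> \<le> mu z / 2"
        using assms(4)[of z] assms(6) by (simp add: field_simps)
      finally show ?thesis .
    qed
    moreover have "c * q z \<le> c * p z + (if z \<in> E then c * M else 0)"
      using mult_left_mono[OF assms(7)[of z], of c] \<open>0 < c\<close> by (auto simp: distrib_left)
    ultimately show ?thesis
      using assms(4)[of z] by (auto split: if_splits)
  qed
  ultimately show ?thesis
    by blast
qed

lemma limit_computable_preimage:
  assumes lim: "\<forall>x. if \<exists>v t0. \<forall>t\<ge>t0. g x t = v then \<exists>t0. \<forall>t\<ge>t0. g x t = B x else B x = []"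
    and "z \<noteq> []"
  shows "{x. B x = z} = stable_preimage g z"
proof -
  have stable_iff: "(\<exists>t. \<not> unstable g x t \<and> g x t = v) \<longleftrightarrow> (\<exists>t0. \<forall>t\<ge>t0. g x t = v)" for x v
    unfolding unstable_def by (metis order_refl)
  have "B x = z \<longleftrightarrow> (\<exists>t0. \<forall>t\<ge>t0. g x t = z)" for x
  proof (cases "\<exists>v t0. \<forall>t\<ge>t0. g x t = v")
    case True
    then obtain t0 where t0: "\<forall>t\<ge>t0. g x t = B x"
      using lim by metis
    show ?thesis
    proof
      assume "\<exists>t1. \<forall>t\<ge>t1. g x t = z"
      then obtain t1 where "\<forall>t\<ge>t1. g x t = z" by blast
      with t0 show "B x = z"
        by (metis max.cobounded1 max.cobounded2)
    qed (use t0 in blast)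
  next
    case False
    then show ?thesis
      using lim \<open>z \<noteq> []\<close> by auto
  qed
  then show ?thesis
    unfolding stable_preimage_def stable_iff by blast
qed

lemma preimage_mass_le:
  assumes m: "semimeasure m" and preimage: "\<And>z. z \<noteq> [] \<Longrightarrow> {x. B x = z} = S z"
  shows "infsum m {x. B x = z} \<le> infsum m (S z - {[]}) + (if z \<in> {[], B []} then infsum m UNIV else 0)"
proof -
  have m_nonneg: "0 \<le> m x" for x
    using m unfolding semimeasure_def by blast
  note summable = summable_on_subset[OF semimeasure_summable[OF m]]
  have le_total: "infsum m A \<le> infsum m UNIV" for A
    using m_nonneg by (intro infsum_mono2 summable) auto
  consider "z = []" | "z \<noteq> []" "B [] \<noteq> z" | "z \<noteq> []" "B [] = z"
    by blast
  then show ?thesis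
  proof cases
    case 1
    then show ?thesis
      using le_total[of "{x. B x = z}"] infsum_nonneg[of "S z - {[]}" m] m_nonneg by simp
  next
    case 2
    then have "{x. B x = z} = S z - {[]}"
      using preimage by auto
    then show ?thesis
      using 2 by simp
  next
    case 3
    then have "{x. B x = z} = insert [] (S z - {[]})"
      using preimage by auto
    moreover have "infsum m (insert [] (S z - {[]})) = m [] + infsum m (S z - {[]})"
      by (rule infsum_insert[OF summable]) auto
    ultimately have "infsum m {x. B x = z} = m [] + infsum m (S z - {[]})"
      by simp
    moreover have "m [] \<le> infsum m UNIV"
      using le_total[of "{[]}"] by simp
    ultimately show ?thesis
      using 3 by simp
  qed
qed

theorem mainTheorem6:
  fixes B :: "bool list \<Rightarrow> bool list"
    and U :: "bool list \<Rightarrow> bool list option"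
    and m mH :: "bool list \<Rightarrow> real"
  assumes "limit_computable B"
    and "universal_pf_machine U"
    and "universal_semimeasure no_oracle m"
    and "universal_semimeasure (halting_seq U) mH"
  shows "\<exists>c>0. \<forall>z. mH z \<ge> c * infsum m {x. B x = z}"
proof -
  obtain g where g: "total_comp_str_nat_nat no_oracle (\<lambda>x t. enc (g x t))"
    and lim: "\<forall>x. if \<exists>v t0. \<forall>t\<ge>t0. g x t = v then \<exists>t0. \<forall>t\<ge>t0. g x t = B x else B x = []"
    using assms(1) unfolding limit_computable_def by blast
  have m: "semimeasure m" "lower_semicomp no_oracle m"
    using assms(3) unfolding universal_semimeasure_def by auto
  define p where "p z = infsum m (stable_preimage g z - {[]})" for z
  have "semimeasure p"
    unfolding p_def using disjoint_family_stable_preimage[of g]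
    by (intro semimeasure_disjoint_family[OF m(1)]) (auto simp: disjoint_family_on_def)
  moreover have "lower_semicomp (halting_seq U) p"
    unfolding p_def
    using lower_semicomp_stable_preimage_mass[OF m(1) lower_semicomp_relativize[OF m(2)]
        total_comp_str_nat_nat_relativize[OF g] total_comp_str_nat_nat_halting_seq_unstable[OF assms(2) g]] .
  ultimately obtain c1 where "0 < c1" "\<And>z. c1 * p z \<le> mH z"
    using assms(4) unfolding universal_semimeasure_def by blast
  moreover have "infsum m {x. B x = z} \<le> p z + (if z \<in> {[], B []} then infsum m UNIV else 0)" for z
    unfolding p_def using preimage_mass_le[OF m(1) limit_computable_preimage[OF lim]] .
  moreover have "0 \<le> p z" "0 \<le> infsum m UNIV" for z
    using m(1) unfolding p_def semimeasure_def by (auto intro: infsum_nonneg)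
  ultimately show ?thesis
    using universal_semimeasure_pos[OF assms(4)]
    by (intro dominated_up_to_finite_exceptions[where p = p and d = c1 and E = "{[], B []}"
          and M = "infsum m UNIV"]) auto
qed

end
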